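(* Let $u,v\in U^I_{\min}$. If a monomial $\Lambda^l=\Lambda_1^{l_1}\cdots\Lambda_N^{l_N}$ ($l\in\mathbb{Z}^N$) appears with nonzero coefficient in the Laurent polynomial $D^I_{uv}(\Lambda)$, then $l\in L_u$.
   Context: $p$ prime, $n\ge1$, $d\ge2$, $I\subseteq\{0,\dots,n\}$; ${\bf a}_1,\dots,{\bf a}_N\in\mathbb{N}^{n+1}$ with coordinate sums $d$, ${\bf a}_j^+=({\bf a}_j,1)\in\mathbb{N}^{n+2}$. $\mu_I$: $\lceil|I|/d\rceil=\mu_I+1$. $U^I_{\min}$: the set of $u\in\mathbb{N}^{n+2}$ with $\sum_{i=0}^nu_i=du_{n+1}$, $u_i>0$ for $i\in I$, and $u_{n+1}=\mu_I+1$. Hypothesis: $N\ge\mu_I+|U^I_{\min}|$ and for each $u\in U^I_{\min}$ there is $k_u$, $1\le k_u\le|U^I_{\min}|$, with $u={\bf a}^+_{\mu_I+k_u}+\sum_{j=1}^{\mu_I}{\bf a}_j^+$. Define $A^I_{uv}(\Lambda)=(-1)^{\mu_I+1}\sum_{\nu\in\mathbb{N}^N,\ \sum_j\nu_j{\bf a}_j^+=pu-v}\Lambda^\nu/(\nu_1!\cdots\nu_N!)$ and $$D^I_{uv}(\Lambda)=\Big(\prod_{j=1}^{\mu_I}\Lambda_j\Big)^{-(p-1)}\Lambda_{\mu_I+k_u}^{-p}\Lambda_{\mu_I+k_v}A^I_{uv}(\Lambda).$$ $L_u$ is the set of $l\in\mathbb{Z}^N$ with $\sum_{k=1}^Nl_k{\bf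 a}_k^+={\bf 0}$, $l_j\le0$ for $j=1,\dots,\mu_I$ and $j=\mu_I+k_u$, and $l_j\ge0$ otherwise. *)

theory Defs
  imports Complex_Main "HOL-Library.Poly_Mapping" "HOL-Computational_Algebra.Primes"
begin

text \<open>Laurent polynomials in variables Lambda_1,...,Lambda_N with rational coefficients:
  finitely supported maps from integer exponent vectors (finitely supported nat => int)
  to rat; multiplication is the convolution product of Poly_Mapping.\<close>
type_synonym laurent = "(nat \<Rightarrow>\<^sub>0 int) \<Rightarrow>\<^sub>0 rat"

definition Lvar :: "nat \<Rightarrow> int \<Rightarrow> laurent" where
  "Lvar j e = Poly_Mapping.single (Poly_Mapping.single j e) 1"

definition Lconst :: "rat \<Rightarrow> laurent" where
  "Lconst c = Poly_Mapping.single 0 c"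

definition aplus :: "(nat \<Rightarrow> nat \<Rightarrow> nat) \<Rightarrow> nat \<Rightarrow> nat \<Rightarrow> nat \<Rightarrow> nat" where
  "aplus a n j i = (if i \<le> n then a j i else if i = Suc n then 1 else 0)"

definition Umin :: "nat \<Rightarrow> nat \<Rightarrow> nat set \<Rightarrow> nat \<Rightarrow> (nat \<Rightarrow> nat) set" where
  "Umin n d I mu = {u. (\<forall>i > Suc n. u i = 0) \<and> (\<Sum>i\<le>n. u i) = d * u (Suc n)
                       \<and> (\<forall>i\<in>I. u i > 0) \<and> u (Suc n) = mu + 1}"

definition Acoef :: "nat \<Rightarrow> nat \<Rightarrow> nat \<Rightarrow> (nat \<Rightarrow> nat \<Rightarrow> nat) \<Rightarrow> nat \<Rightarrow>
                     (nat \<Rightarrow> nat) \<Rightarrow> (nat \<Rightarrow> nat) \<Rightarrow> laurent" where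
  "Acoef p n N a mu u v =
     Lconst ((-1) ^ (mu + 1)) *
     (\<Sum>\<nu> \<in> {\<nu> :: nat \<Rightarrow> nat. (\<forall>j. j \<notin> {1..N} \<longrightarrow> \<nu> j = 0) \<and>
               (\<forall>i \<le> Suc n. int (\<Sum>j=1..N. \<nu> j * aplus a n j i) = int p * int (u i) - int (v i))}.
        Lconst (1 / (\<Prod>j=1..N. fact (\<nu> j))) * (\<Prod>j=1..N. Lvar j (int (\<nu> j))))"

definition Dcoef :: "nat \<Rightarrow> nat \<Rightarrow> nat \<Rightarrow> (nat \<Rightarrow> nat \<Rightarrow> nat) \<Rightarrow> nat \<Rightarrow> ((nat \<Rightarrow> nat) \<Rightarrow> nat) \<Rightarrow>
                     (nat \<Rightarrow> nat) \<Rightarrow> (nat \<Rightarrow> nat) \<Rightarrow> laurent" where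
  "Dcoef p n N a mu k u v =
     (\<Prod>j=1..mu. Lvar j (- (int p - 1))) * Lvar (mu + k u) (- int p) * Lvar (mu + k v) 1
       * Acoef p n N a mu u v"

definition Lset :: "nat \<Rightarrow> nat \<Rightarrow> (nat \<Rightarrow> nat \<Rightarrow> nat) \<Rightarrow> nat \<Rightarrow> ((nat \<Rightarrow> nat) \<Rightarrow> nat) \<Rightarrow>
                    (nat \<Rightarrow> nat) \<Rightarrow> (nat \<Rightarrow>\<^sub>0 int) set" where
  "Lset n N a mu k u = {l. Poly_Mapping.keys l \<subseteq> {1..N} \<and>
      (\<forall>i \<le> Suc n. (\<Sum>j=1..N. Poly_Mapping.lookup l j * int (aplus a n j i)) = 0) \<and>
      (\<forall>j\<in>{1..N}. (if j \<le> mu \<or> j = mu + k u then Poly_Mapping.lookup l j \<le> 0 else Poly_Mapping.lookup l j \<ge> 0))}"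

end

theory Submission imports Defs begin

text \<open>Every monomial of \<open>D\<^sup>I\<^sub>u\<^sub>v\<close> has exponent
  \<open>l = -(p-1)(e\<^sub>1+\<dots>+e\<^sub>\<mu>) - p e\<^bsub>\<mu>+k\<^sub>u\<^esub> + e\<^bsub>\<mu>+k\<^sub>v\<^esub> + \<nu>\<close> (\<open>e\<^sub>j\<close> the unit vectors) for some \<open>\<nu>\<close> with
  \<open>\<Sum>\<^sub>j \<nu>\<^sub>j a\<^sub>j\<^sup>+ = pu - v\<close>. Since \<open>u\<close> and \<open>v\<close> are sums of the same \<open>a\<^sub>j\<^sup>+\<close>, \<open>j \<le> \<mu>\<close>, plus one
  further \<open>a\<^sup>+\<close>, the relation \<open>\<Sum>\<^sub>j l\<^sub>j a\<^sub>j\<^sup>+ = 0\<close> is a direct computation. For the signs one needs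
  \<open>\<nu>\<^sub>j < p\<close> whenever \<open>a\<^sub>j \<le> u\<close> coordinatewise: as \<open>|I| > d\<mu> = \<Sum>\<^sub>i (u\<^sub>i - a\<^sub>j\<^sub>i)\<close>, some
  \<open>i \<in> I\<close> has \<open>a\<^sub>j\<^sub>i = u\<^sub>i > 0\<close>, and then \<open>\<nu>\<^sub>j u\<^sub>i \<le> pu\<^sub>i - v\<^sub>i < pu\<^sub>i\<close>.\<close>

definition A_index_set ::
    "nat \<Rightarrow> nat \<Rightarrow> nat \<Rightarrow> (nat \<Rightarrow> nat \<Rightarrow> nat) \<Rightarrow> (nat \<Rightarrow> nat) \<Rightarrow> (nat \<Rightarrow> nat) \<Rightarrow> (nat \<Rightarrow> nat) set" where
  "A_index_set p n N a u v = {\<nu>. (\<forall>j. j \<notin> {1..N} \<longrightarrow> \<nu> j = 0) \<and>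
      (\<forall>i \<le> Suc n. int (\<Sum>j=1..N. \<nu> j * aplus a n j i) = int p * int (u i) - int (v i))}"

definition D_exponent ::
    "nat \<Rightarrow> nat \<Rightarrow> nat \<Rightarrow> ((nat \<Rightarrow> nat) \<Rightarrow> nat) \<Rightarrow> (nat \<Rightarrow> nat) \<Rightarrow> (nat \<Rightarrow> nat) \<Rightarrow> (nat \<Rightarrow> nat)
      \<Rightarrow> nat \<Rightarrow>\<^sub>0 int" where
  "D_exponent p N mu k u v \<nu> =
     (\<Sum>j=1..mu. Poly_Mapping.single j (- (int p - 1))) + Poly_Mapping.single (mu + k u) (- int p)
       + Poly_Mapping.single (mu + k v) 1 + (\<Sum>j=1..N. Poly_Mapping.single j (int (\<nu> j)))"


lemma keys_mult_monomial:
  fixes f g :: "'a::comm_monoid_add \<Rightarrow>\<^sub>0 'b::semiring_0"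
  assumes "Poly_Mapping.keys f \<subseteq> {x}"
  shows "Poly_Mapping.keys (f * g) \<subseteq> (+) x ` Poly_Mapping.keys g"
  using keys_mult[of f g] assms by blast

lemma keys_mult_monomials:
  fixes f g :: "'a::comm_monoid_add \<Rightarrow>\<^sub>0 'b::semiring_0"
  assumes "Poly_Mapping.keys f \<subseteq> {x}" and "Poly_Mapping.keys g \<subseteq> {y}"
  shows "Poly_Mapping.keys (f * g) \<subseteq> {x + y}"
  using keys_mult_monomial[OF assms(1), of g] assms(2) by blast

lemma keys_Lconst_mult: "Poly_Mapping.keys (Lconst c * f) \<subseteq> Poly_Mapping.keys f"
  using keys_mult_monomial[of "Lconst c" 0 f] by (simp add: Lconst_def)

lemma keys_Lvar_mult:
  "Poly_Mapping.keys (Lvar j e * f) \<subseteq> (+) (Poly_Mapping.single j e) ` Poly_Mapping.keys f"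
  by (rule keys_mult_monomial) (simp add: Lvar_def)

lemma keys_prod_Lvar:
  "finite A \<Longrightarrow> Poly_Mapping.keys (\<Prod>j\<in>A. Lvar j (e j)) \<subseteq> {\<Sum>j\<in>A. Poly_Mapping.single j (e j)}"
proof (induction A rule: finite_induct)
  case (insert x F)
  then show ?case
    using keys_Lvar_mult[of x "e x" "\<Prod>j\<in>F. Lvar j (e j)"] by auto
qed simp

lemma keys_Acoef:
  "Poly_Mapping.keys (Acoef p n N a mu u v)
     \<subseteq> (\<lambda>\<nu>. \<Sum>j=1..N. Poly_Mapping.single j (int (\<nu> j))) ` A_index_set p n N a u v"
proof -
  let ?E = "\<lambda>\<nu>::nat \<Rightarrow> nat. \<Sum>j=1..N. Poly_Mapping.single j (int (\<nu> j))"
  let ?t = "\<lambda>\<nu>. Lconst (1 / (\<Prod>j=1..N. fact (\<nu> j))) * (\<Prod>j=1..N. Lvar j (int (\<nu> j)))"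
  have "Poly_Mapping.keys (?t \<nu>) \<subseteq> {?E \<nu>}" for \<nu>
    using keys_Lconst_mult keys_prod_Lvar[of "{1..N}"] by (meson finite_atLeastAtMost order_trans)
  then have "Poly_Mapping.keys (\<Sum>\<nu>\<in>A_index_set p n N a u v. ?t \<nu>) \<subseteq> ?E ` A_index_set p n N a u v"
    using keys_sum[of ?t] by blast
  then show ?thesis
    unfolding Acoef_def A_index_set_def by (meson keys_Lconst_mult order_trans)
qed

lemma keys_Dcoef:
  "Poly_Mapping.keys (Dcoef p n N a mu k u v) \<subseteq> D_exponent p N mu k u v ` A_index_set p n N a u v"
proof -
  let ?m = "\<Sum>j=1..mu. Poly_Mapping.single j (- (int p - 1))"
  let ?M = "(\<Prod>j=1..mu. Lvar j (- (int p - 1))) * Lvar (mu + k u) (- int p) * Lvar (mu + k v) 1"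
  have "Poly_Mapping.keys ((\<Prod>j=1..mu. Lvar j (- (int p - 1))) * Lvar (mu + k u) (- int p))
          \<subseteq> {?m + Poly_Mapping.single (mu + k u) (- int p)}"
    by (intro keys_mult_monomials keys_prod_Lvar) (simp_all add: Lvar_def)
  then have "Poly_Mapping.keys ?M
          \<subseteq> {?m + Poly_Mapping.single (mu + k u) (- int p) + Poly_Mapping.single (mu + k v) 1}"
    by (rule keys_mult_monomials) (simp add: Lvar_def)
  then have "Poly_Mapping.keys (?M * Acoef p n N a mu u v)
          \<subseteq> (+) (?m + Poly_Mapping.single (mu + k u) (- int p) + Poly_Mapping.single (mu + k v) 1)
                ` Poly_Mapping.keys (Acoef p n N a mu u v)"
    by (rule keys_mult_monomial)
  with keys_Acoef show ?thesis
    unfolding Dcoef_def D_exponent_def by fastforce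
qed


lemma lookup_sum_single:
  "finite A \<Longrightarrow> Poly_Mapping.lookup (\<Sum>i\<in>A. Poly_Mapping.single i (e i)) j = (if j \<in> A then e j else 0)"
  by (simp add: lookup_sum lookup_single when_def sum.delta)

lemma sum_lookup_add_mult:
  "(\<Sum>j\<in>A. Poly_Mapping.lookup (f + g) j * c j)
     = (\<Sum>j\<in>A. Poly_Mapping.lookup f j * c j) + (\<Sum>j\<in>A. Poly_Mapping.lookup g j * (c j :: 'a::comm_semiring_1))"
  by (simp add: lookup_add distrib_right sum.distrib)

lemma sum_lookup_sum_single_mult:
  assumes "finite A" "B \<subseteq> A"
  shows "(\<Sum>j\<in>A. Poly_Mapping.lookup (\<Sum>i\<in>B. Poly_Mapping.single i (e i)) j * c j)
           = (\<Sum>i\<in>B. e i * (c i :: 'a::comm_semiring_1))"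
proof -
  have "finite B" using assms finite_subset by blast
  then have "(\<Sum>j\<in>A. Poly_Mapping.lookup (\<Sum>i\<in>B. Poly_Mapping.single i (e i)) j * c j)
               = (\<Sum>j\<in>A. if j \<in> B then e j * c j else 0)"
    by (intro sum.cong) (simp_all add: lookup_sum_single)
  also have "\<dots> = (\<Sum>i\<in>B. e i * c i)"
    using assms by (simp add: sum.inter_restrict[symmetric] Int_absorb1)
  finally show ?thesis .
qed

lemma sum_lookup_single_mult:
  "finite A \<Longrightarrow> x \<in> A \<Longrightarrow>
     (\<Sum>j\<in>A. Poly_Mapping.lookup (Poly_Mapping.single x e) j * c j) = e * (c x :: 'a::comm_semiring_1)"
  using sum_lookup_sum_single_mult[of A "{x}" "\<lambda>_. e" c] by simp

lemma lookup_D_exponent: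
  assumes "\<nu> \<in> A_index_set p n N a u v"
  shows "Poly_Mapping.lookup (D_exponent p N mu k u v \<nu>) j =
           (if j \<in> {1..mu} then - (int p - 1) else 0) + (if j = mu + k u then - int p else 0)
             + (if j = mu + k v then 1 else 0) + int (\<nu> j)"
  using assms
  by (simp add: D_exponent_def A_index_set_def lookup_add lookup_sum_single lookup_single when_def)


lemma D_exponent_relation:
  assumes "\<nu> \<in> A_index_set p n N a u v" and "i \<le> Suc n"
    and "1 \<le> k u" "mu + k u \<le> N" and "1 \<le> k v" "mu + k v \<le> N"
    and "u = (\<lambda>i. aplus a n (mu + k u) i + (\<Sum>j=1..mu. aplus a n j i))"
    and "v = (\<lambda>i. aplus a n (mu + k v) i + (\<Sum>j=1..mu. aplus a n j i))"
  shows "(\<Sum>j=1..N. Poly_Mapping.lookup (D_exponent p N mu k u v \<nu>) j * int (aplus a n j i)) = 0"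
proof -
  let ?c = "\<lambda>j. int (aplus a n j i)"
  have \<nu>: "(\<Sum>j=1..N. int (\<nu> j) * ?c j) = int p * int (u i) - int (v i)"
    using assms(1,2) by (simp add: A_index_set_def)
  have "(\<Sum>j=1..N. Poly_Mapping.lookup (D_exponent p N mu k u v \<nu>) j * ?c j)
      = - (int p - 1) * (\<Sum>j=1..mu. ?c j) - int p * ?c (mu + k u) + ?c (mu + k v)
          + (\<Sum>j=1..N. int (\<nu> j) * ?c j)"
    unfolding D_exponent_def sum_lookup_add_mult
    using assms(3-6)
    by (simp add: sum_lookup_sum_single_mult sum_lookup_single_mult
        sum_distrib_left of_bool_def[symmetric])
  also have "\<dots> = 0"
    unfolding \<nu> by (subst (1 2) assms(7,8)) (simp add: algebra_simps)
  finally show ?thesis .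
qed


lemma ceiling_div_eq_Suc_imp_less:
  assumes "d > 0" and "\<lceil>real c / real d\<rceil> = int mu + 1"
  shows "d * mu < c"
proof -
  have "real mu < real c / real d" using assms(2) by linarith
  then have "real (d * mu) < real c" using assms(1) by (simp add: field_simps)
  then show ?thesis by linarith
qed

lemma ex_tight_coordinate:
  fixes x y :: "nat \<Rightarrow> nat"
  assumes "I \<subseteq> {..n}" and "\<forall>i\<le>n. x i \<le> y i" and "(\<Sum>i\<le>n. y i) < (\<Sum>i\<le>n. x i) + card I"
  shows "\<exists>i\<in>I. x i = y i"
proof (rule ccontr)
  assume "\<not> ?thesis"
  then have gap: "\<forall>i\<in>I. 1 \<le> y i - x i"
    using assms(1,2) by (fastforce simp: le_diff_conv2)
  have "card I = (\<Sum>i\<in>I. 1)" by simp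
  also have "\<dots> \<le> (\<Sum>i\<in>I. y i - x i)" using gap by (intro sum_mono) auto
  also have "\<dots> \<le> (\<Sum>i\<le>n. y i - x i)" using assms(1) by (intro sum_mono2) auto
  also have "\<dots> = (\<Sum>i\<le>n. y i) - (\<Sum>i\<le>n. x i)"
    using assms(2) by (intro sum_subtractf_nat) auto
  finally have "card I \<le> (\<Sum>i\<le>n. y i) - (\<Sum>i\<le>n. x i)" .
  moreover have "(\<Sum>i\<le>n. x i) \<le> (\<Sum>i\<le>n. y i)"
    using assms(2) by (intro sum_mono) auto
  ultimately show False using assms(3) by linarith
qed

lemma A_index_set_coordinate_less:
  assumes "I \<subseteq> {0..n}" and "d * mu < card I"
    and "u \<in> Umin n d I mu" and "v \<in> Umin n d I mu" and "\<nu> \<in> A_index_set p n N a u v"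
    and "j \<in> {1..N}" and "(\<Sum>i\<le>n. a j i) = d" and "\<forall>i\<le>n. a j i \<le> u i"
  shows "\<nu> j < p"
proof -
  have "(\<Sum>i\<le>n. u i) = d * mu + d" and u_pos: "\<forall>i\<in>I. u i > 0" and v_pos: "\<forall>i\<in>I. v i > 0"
    using assms(3,4) by (auto simp: Umin_def)
  then obtain i where "i \<in> I" and tight: "a j i = u i"
    using ex_tight_coordinate[of I n "a j" u] assms(1,2,7,8) by fastforce
  then have "i \<le> n" using assms(1) by auto
  have "\<nu> j * aplus a n j i \<le> (\<Sum>j=1..N. \<nu> j * aplus a n j i)"
    using assms(6) by (intro member_le_sum) auto
  also have "int \<dots> = int p * int (u i) - int (v i)"
    using assms(5) \<open>i \<le> n\<close> by (simp add: A_index_set_def)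
  finally have "int (\<nu> j) * int (u i) \<le> int p * int (u i) - int (v i)"
    using tight \<open>i \<le> n\<close> by (simp add: aplus_def)
  then have "int (\<nu> j) * int (u i) < int p * int (u i)"
    using v_pos[rule_format, OF \<open>i \<in> I\<close>] by linarith
  then show ?thesis
    using u_pos \<open>i \<in> I\<close> by (simp add: mult_less_cancel_right)
qed

lemma D_exponent_sign:
  assumes "I \<subseteq> {0..n}" and "d * mu < card I" and "\<forall>j\<in>{1..N}. (\<Sum>i\<le>n. a j i) = d"
    and "u \<in> Umin n d I mu" and "v \<in> Umin n d I mu" and "\<nu> \<in> A_index_set p n N a u v"
    and "1 \<le> k u" "1 \<le> k v"
    and "u = (\<lambda>i. aplus a n (mu + k u) i + (\<Sum>j=1..mu. aplus a n j i))"
    and "j \<in> {1..N}"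
  shows "if j \<le> mu \<or> j = mu + k u then Poly_Mapping.lookup (D_exponent p N mu k u v \<nu>) j \<le> 0
         else Poly_Mapping.lookup (D_exponent p N mu k u v \<nu>) j \<ge> 0"
proof (cases "j \<le> mu \<or> j = mu + k u")
  case True
  have "aplus a n j i \<le> u i" for i
  proof -
    have "aplus a n j i \<le> (\<Sum>j=1..mu. aplus a n j i)" if "j \<le> mu"
      using that assms(10) by (intro member_le_sum) auto
    then show ?thesis using True by (subst assms(9)) auto
  qed
  then have "\<forall>i\<le>n. a j i \<le> u i" by (metis aplus_def)
  then have "\<nu> j < p"
    using A_index_set_coordinate_less assms(1-6,10) by blast
  then show ?thesis
    using True assms(7,8,10) by (auto simp: lookup_D_exponent[OF assms(6)])
qed (auto simp: lookup_D_exponent[OF assms(6)])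

lemma D_exponent_in_Lset:
  assumes "I \<subseteq> {0..n}" and "d * mu < card I" and "\<forall>j\<in>{1..N}. (\<Sum>i\<le>n. a j i) = d"
    and "u \<in> Umin n d I mu" and "v \<in> Umin n d I mu" and "\<nu> \<in> A_index_set p n N a u v"
    and "1 \<le> k u" "mu + k u \<le> N" and "1 \<le> k v" "mu + k v \<le> N"
    and "u = (\<lambda>i. aplus a n (mu + k u) i + (\<Sum>j=1..mu. aplus a n j i))"
    and "v = (\<lambda>i. aplus a n (mu + k v) i + (\<Sum>j=1..mu. aplus a n j i))"
  shows "D_exponent p N mu k u v \<nu> \<in> Lset n N a mu k u"
proof -
  have "Poly_Mapping.keys (D_exponent p N mu k u v \<nu>) \<subseteq> {1..N}"
  proof
    fix j assume j: "j \<in> Poly_Mapping.keys (D_exponent p N mu k u v \<nu>)"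
    show "j \<in> {1..N}"
    proof (rule ccontr)
      assume "j \<notin> {1..N}"
      then have "\<nu> j = 0" using assms(6) by (simp add: A_index_set_def)
      then show False
        using j \<open>j \<notin> {1..N}\<close> assms(7-10) by (auto simp: in_keys_iff lookup_D_exponent[OF assms(6)])
    qed
  qed
  then show ?thesis
    unfolding Lset_def
    using D_exponent_relation[OF assms(6) _ assms(7-12)] D_exponent_sign[OF assms(1-7,9,11)]
    by blast
qed

theorem lemma7p5:
  fixes p n d N mu :: nat and I :: "nat set" and a :: "nat \<Rightarrow> nat \<Rightarrow> nat"
    and k :: "(nat \<Rightarrow> nat) \<Rightarrow> nat" and u v :: "nat \<Rightarrow> nat" and l :: "nat \<Rightarrow>\<^sub>0 int"
  assumes "prime p" and "n \<ge> 1" and "d \<ge> 2" and "I \<subseteq> {0..n}"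
    and "\<forall>j\<in>{1..N}. (\<Sum>i\<le>n. a j i) = d"
    and "\<lceil>real (card I) / real d\<rceil> = int mu + 1"
    and "N \<ge> mu + card (Umin n d I mu)"
    and "\<forall>w\<in>Umin n d I mu. 1 \<le> k w \<and> k w \<le> card (Umin n d I mu) \<and>
           w = (\<lambda>i. aplus a n (mu + k w) i + (\<Sum>j=1..mu. aplus a n j i))"
    and "u \<in> Umin n d I mu" and "v \<in> Umin n d I mu"
    and "Poly_Mapping.lookup (Dcoef p n N a mu k u v) l \<noteq> 0"
  shows "l \<in> Lset n N a mu k u"
proof -
  have "d * mu < card I"
    using ceiling_div_eq_Suc_imp_less assms(3,6) by simp
  moreover obtain \<nu> where "\<nu> \<in> A_index_set p n N a u v" and "l = D_exponent p N mu k u v \<nu>"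
    using keys_Dcoef assms(11) by (fastforce simp: in_keys_iff)
  moreover have "1 \<le> k u" "mu + k u \<le> N" "1 \<le> k v" "mu + k v \<le> N"
    using assms(7-10) by auto
  ultimately show ?thesis
    using D_exponent_in_Lset[OF assms(4) _ assms(5,9,10)] assms(8-10) by blast
qed

end
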